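(* Assume all deadlines are positive integers. For $\bar d\in\mathcal D$, an integer $q$ with $2\le q\le\bar d$, and $i\in\{0,\dots,q-1\}$, let $\mathcal K(\bar d,i,q)=\{k\in\mathcal K:\bar d_k\le\bar d,\ i\,\bar d/q<t_k\le(i+1)\,\bar d/q\}$. Then for every feasible solution $(\rho_{kp})$ of $B(\mathcal K)$, the vector $\rho_k=\sum_{p\in\mathcal P}\rho_{kp}$ satisfies $$\sum_{i=1}^{q-1}\sum_{k\in\mathcal K(\bar d,i,q)} i\,\rho_k\le (q-1)\,|\mathcal P|.$$
   Context: Let $\mathcal O$ be a finite set of orders, each order $o\in\mathcal O$ having a deadline $\bar d_o>0$; let $\mathcal D=\{\bar d_o: o\in\mathcal O\}$ be the set of distinct deadlines and let $\mathcal P$ be a finite nonempty set of pickers. Let $\mathcal K$ be a finite set of routes; each route $k\in\mathcal K$ has a nonempty batch of orders $\mathcal O_k\subseteq\mathcal O$ and a duration $t_k>0$, and its deadline is $\bar d_k=\min_{o\in\mathcal O_k}\bar d_o$. Write $\mathcal K(o)=\{k\in\mathcal K: o\in\mathcal O_k\}$ and $\mathcal K(\bar d)=\{k\in\mathcal K:\bar d_k\le\bar d\}$. Formulation $B(\mathcal K)$: binary variables $\rho_{kp}\in\{0,1\}$ ($k\in\mathcal K,p\in\mathcal P$); minimize $\sum_{k\in\mathcal K}t_k\sum_{p\in\mathcal P}\rho_{kp}$ subject to $\sum_{k\in\mathcal K(o)}\sum_{p\in\mathcal P}\rho_{kp}\ge 1$ for all $o\in\mathcal O$, and $\sum_{k\in\mathcal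 K(\bar d)}t_k\rho_{kp}\le\bar d$ for all $\bar d\in\mathcal D$, $p\in\mathcal P$. *)

theory Defs
  imports Complex_Main
begin

text \<open>Orders have type 'o with deadline dl o (a positive integer, modelled as nat);
 routes have type 'k with batch Ob k and duration t k; pickers have type 'p.\<close>

definition route_deadline :: "('o \<Rightarrow> nat) \<Rightarrow> ('k \<Rightarrow> 'o set) \<Rightarrow> 'k \<Rightarrow> nat" where
  "route_deadline dl Ob k = Min (dl ` Ob k)"

definition deadlines :: "'o set \<Rightarrow> ('o \<Rightarrow> nat) \<Rightarrow> nat set" where
  "deadlines Ords dl = dl ` Ords"

definition feasible_B ::
  "'o set \<Rightarrow> ('o \<Rightarrow> nat) \<Rightarrow> 'p set \<Rightarrow> 'k set \<Rightarrow> ('k \<Rightarrow> 'o set) \<Rightarrow> ('k \<Rightarrow> real)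
   \<Rightarrow> ('k \<Rightarrow> 'p \<Rightarrow> nat) \<Rightarrow> bool" where
  "feasible_B Ords dl P K Ob t rho \<longleftrightarrow>
     (\<forall>k\<in>K. \<forall>p\<in>P. rho k p \<in> {0, 1}) \<and>
     (\<forall>x\<in>Ords. (\<Sum>k\<in>{k\<in>K. x \<in> Ob k}. \<Sum>p\<in>P. rho k p) \<ge> 1) \<and>
     (\<forall>d\<in>deadlines Ords dl. \<forall>p\<in>P.
        (\<Sum>k\<in>{k\<in>K. route_deadline dl Ob k \<le> d}. t k * real (rho k p)) \<le> real d)"

definition K_class ::
  "'k set \<Rightarrow> ('o \<Rightarrow> nat) \<Rightarrow> ('k \<Rightarrow> 'o set) \<Rightarrow> ('k \<Rightarrow> real) \<Rightarrow> nat \<Rightarrow> nat \<Rightarrow> nat \<Rightarrow> 'k set" where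
  "K_class K dl Ob t d i q =
     {k\<in>K. route_deadline dl Ob k \<le> d \<and>
            real i * real d / real q < t k \<and> t k \<le> real (i + 1) * real d / real q}"

end

theory Submission
  imports Defs
begin

text \<open>Fix a picker \<open>p\<close> and put \<open>c = d/q\<close>. A route in class \<open>i\<close> has \<open>t\<^sub>k > i c\<close>, so
  \<open>i \<rho>\<^sub>k\<^sub>p \<le> t\<^sub>k \<rho>\<^sub>k\<^sub>p / c\<close>, strictly whenever \<open>\<rho>\<^sub>k\<^sub>p \<noteq> 0\<close>. The classes are disjoint and
  contained in \<open>\<K>(d)\<close>, so the capacity constraint of \<open>p\<close> for deadline \<open>d\<close> bounds the
  weighted count of \<open>p\<close>'s routes by \<open>d/c = q\<close>, strictly unless it is \<open>0\<close>. Being an integer,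
  it is at most \<open>q - 1\<close>; summing over the pickers gives the claim.\<close>

lemma sum_less_sum_if_nonzero:
  fixes f g :: "'a \<Rightarrow> 'b::ordered_cancel_comm_monoid_add"
  assumes "finite A" and "\<And>x. x \<in> A \<Longrightarrow> f x \<le> g x"
    and "\<And>x. x \<in> A \<Longrightarrow> f x \<noteq> 0 \<Longrightarrow> f x < g x" and "sum f A \<noteq> 0"
  shows "sum f A < sum g A"
proof -
  obtain x where "x \<in> A" "f x \<noteq> 0"
    using assms(4) sum.not_neutral_contains_not_neutral by blast
  then show ?thesis
    using assms(1-3) by (intro sum_strict_mono_ex1) auto
qed

lemma K_class_disjoint:
  assumes "i \<noteq> j"
  shows "K_class K dl Ob t d i q \<inter> K_class K dl Ob t d j q = {}"
proof -
  have "False" if "a < b" "k \<in> K_class K dl Ob t d a q" "k \<in> K_class K dl Ob t d b q" for a b k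
  proof -
    have "real (a + 1) * (real d / real q) \<le> real b * (real d / real q)"
      using \<open>a < b\<close> by (intro mult_right_mono) auto
    with that(2,3) show False by (auto simp: K_class_def)
  qed
  with assms show ?thesis by (metis disjoint_iff linorder_neq_iff)
qed

lemma K_class_subset_deadline:
  "K_class K dl Ob t d i q \<subseteq> {k\<in>K. route_deadline dl Ob k \<le> d}"
  by (auto simp: K_class_def)

lemma K_class_index_bound:
  assumes "k \<in> K_class K dl Ob t d i q" and "0 < q"
  shows "real i * real d < real q * t k"
  using assms by (simp add: K_class_def field_simps)

lemma sum_K_classes_le_sum_deadline:
  fixes h :: "'k \<Rightarrow> real"
  assumes "finite I" and "finite K" and "\<And>k. k \<in> K \<Longrightarrow> 0 \<le> h k"
  shows "(\<Sum>i\<in>I. \<Sum>k\<in>K_class K dl Ob t d i q. h k) \<le> (\<Sum>k\<in>{k\<in>K. route_deadline dl Ob k \<le> d}. h k)"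
proof -
  have fin: "finite (K_class K dl Ob t d i q)" for i
    using assms(2) by (simp add: K_class_def)
  have "(\<Sum>i\<in>I. \<Sum>k\<in>K_class K dl Ob t d i q. h k) = (\<Sum>k\<in>(\<Union>i\<in>I. K_class K dl Ob t d i q). h k)"
    using assms(1) fin by (intro sum.UNION_disjoint[symmetric]) (auto dest: K_class_disjoint)
  also have "\<dots> \<le> (\<Sum>k\<in>{k\<in>K. route_deadline dl Ob k \<le> d}. h k)"
    using K_class_subset_deadline[of K dl Ob t d _ q] assms(2,3) by (intro sum_mono2) auto
  finally show ?thesis .
qed

lemma weighted_sum_K_classes_le:
  fixes r :: "'k \<Rightarrow> nat" and t :: "'k \<Rightarrow> real"
  assumes "finite K" and "\<And>k. k \<in> K \<Longrightarrow> 0 \<le> t k" and "0 < q" and "0 < d"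
    and cap: "(\<Sum>k\<in>{k\<in>K. route_deadline dl Ob k \<le> d}. t k * real (r k)) \<le> real d"
  shows "(\<Sum>i=1..q-1. \<Sum>k\<in>K_class K dl Ob t d i q. i * r k) \<le> q - 1"
proof -
  define C where "C i = K_class K dl Ob t d i q" for i
  define S where "S = (\<Sum>i=1..q-1. \<Sum>k\<in>C i. i * r k)"
  define f where "f i k = (real i * real d) * real (r k)" for i k
  define g where "g k = (real q * t k) * real (r k)" for k
  have fin: "finite (C i)" for i
    using assms(1) by (simp add: C_def K_class_def)
  have "f i k \<le> g k" and "f i k \<noteq> 0 \<Longrightarrow> f i k < g k" if "k \<in> C i" for i k
    using K_class_index_bound[of k K dl Ob t d i q] that \<open>0 < q\<close>
    by (auto simp: C_def f_def g_def intro: mult_right_mono mult_strict_right_mono)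
  then have f_le_g: "(\<Sum>k\<in>C i. f i k) \<le> (\<Sum>k\<in>C i. g k)"
    and f_lt_g: "(\<Sum>k\<in>C i. f i k) \<noteq> 0 \<Longrightarrow> (\<Sum>k\<in>C i. f i k) < (\<Sum>k\<in>C i. g k)" for i
    by (auto intro: sum_mono sum_less_sum_if_nonzero fin)
  have "(\<Sum>i=1..q-1. \<Sum>k\<in>C i. g k) \<le> (\<Sum>k\<in>{k\<in>K. route_deadline dl Ob k \<le> d}. g k)"
    unfolding C_def using assms(1,2) by (intro sum_K_classes_le_sum_deadline) (auto simp: g_def)
  also have "\<dots> \<le> real q * real d"
    using cap by (simp add: g_def mult.assoc mult_left_mono flip: sum_distrib_left)
  finally have g_bound: "(\<Sum>i=1..q-1. \<Sum>k\<in>C i. g k) \<le> real q * real d" .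
  have f_sum: "(\<Sum>i=1..q-1. \<Sum>k\<in>C i. f i k) = real S * real d"
  proof -
    have "f i k = real (i * r k) * real d" for i k
      by (simp add: f_def)
    then show ?thesis
      by (simp only: S_def of_nat_sum sum_distrib_right)
  qed
  have "S < q" if "S \<noteq> 0"
  proof -
    have "(\<Sum>i=1..q-1. \<Sum>k\<in>C i. f i k) \<noteq> 0"
      using that \<open>0 < d\<close> f_sum by simp
    from sum_less_sum_if_nonzero[OF finite_atLeastAtMost f_le_g f_lt_g this]
    have "real S * real d < real q * real d"
      using f_sum g_bound by simp
    then show ?thesis
      using \<open>0 < d\<close> by simp
  qed
  then have "S \<le> q - 1"
    by (cases "S = 0") auto
  then show ?thesis
    by (simp only: S_def C_def)
qed

theorem proposition5:
  fixes Ords :: "'o set" and dl :: "'o \<Rightarrow> nat" and P :: "'p set"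
    and K :: "'k set" and Ob :: "'k \<Rightarrow> 'o set" and t :: "'k \<Rightarrow> real"
    and rho :: "'k \<Rightarrow> 'p \<Rightarrow> nat" and d q :: nat
  assumes "finite Ords" and "\<forall>x\<in>Ords. dl x > 0"
    and "finite P" and "P \<noteq> {}"
    and "finite K" and "\<forall>k\<in>K. Ob k \<noteq> {} \<and> Ob k \<subseteq> Ords \<and> t k > 0"
    and "feasible_B Ords dl P K Ob t rho"
    and "d \<in> deadlines Ords dl" and "2 \<le> q" and "q \<le> d"
  shows "(\<Sum>i=1..q-1. \<Sum>k\<in>K_class K dl Ob t d i q. i * (\<Sum>p\<in>P. rho k p))
           \<le> (q - 1) * card P"
proof -
  have picker_bound: "(\<Sum>i=1..q-1. \<Sum>k\<in>K_class K dl Ob t d i q. i * rho k p) \<le> q - 1"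
    if "p \<in> P" for p
    using assms(5-10) that
    by (intro weighted_sum_K_classes_le[where r = "\<lambda>k. rho k p"]) (auto simp: feasible_B_def less_imp_le)
  have "(\<Sum>i=1..q-1. \<Sum>k\<in>K_class K dl Ob t d i q. i * (\<Sum>p\<in>P. rho k p))
      = (\<Sum>p\<in>P. \<Sum>i=1..q-1. \<Sum>k\<in>K_class K dl Ob t d i q. i * rho k p)"
    by (simp add: sum_distrib_left sum.swap[of _ P])
  also have "\<dots> \<le> (\<Sum>p\<in>P. q - 1)"
    using picker_bound by (rule sum_mono)
  finally show ?thesis by (simp add: mult.commute)
qed

end
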